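(* Let $U,V\in K_{\mathfrak{C}}$ with $U\cap V\neq\varnothing$. If $G\in\mathscr{K}(U)$ and $H\in\mathscr{K}(V)$, then $\langle G\cup H\rangle\in\mathscr{K}(U\cup V)$. If moreover $G$ and $H$ are finitely generated, then $\langle G\cup H\rangle$ is finitely generated (so lies in $\mathscr{K}^{\mathrm{f.g.}}(U\cup V)$).
   Context: $\mathfrak{C}$ denotes a Cantor space (a space homeomorphic to $\{0,1\}^\omega$). Groups of homeomorphisms act on the right. $K_{\mathfrak{C}}$ denotes the set of non-empty proper clopen subsets of $\mathfrak{C}$. For $\gamma\in\operatorname{Homeo}(\mathfrak{C})$, $\operatorname{supp}(\gamma)=\{p\in\mathfrak{C}: p\gamma\neq p\}$. For a non-empty $D\subseteq\mathfrak{C}$, a subgroup $G\le\operatorname{Homeo}(\mathfrak{C})$ is vigorous over $D$ if for every non-empty clopen $A\subseteq D$ and all non-empty proper clopen subsets $B,C$ of $A$ there is $\gamma\in G$ with $\operatorname{supp}(\gamma)\subseteq A$ and $B\gamma\subseteq C$. $\mathscr{K}(D)$ is the family of simple subgroups $G\le\operatorname{Homeo}(\mathfrak{C})$ such that $\operatorname{supp}(g)\subseteq D$ for all $g\in G$ and $G$ is vigorous over $D$; $\mathscr{K}^{\mathrm{f.g.}}(D)$ is the subfamily of finitely generated groups in $\mathscr{K}(D)$. *)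

theory Defs
  imports "HOL-Analysis.Analysis" "HOL-Algebra.Algebra"
begin

type_synonym cpt = "nat \<Rightarrow> bool"

definition cantor :: "cpt topology" where
  "cantor = product_topology (\<lambda>_. discrete_topology UNIV) UNIV"

definition clopen_c :: "cpt set \<Rightarrow> bool" where
  "clopen_c A \<longleftrightarrow> openin cantor A \<and> closedin cantor A"

definition K_C :: "cpt set set" where
  "K_C = {A. clopen_c A \<and> A \<noteq> {} \<and> A \<noteq> UNIV}"

definition Homeo :: "(cpt \<Rightarrow> cpt) set" where
  "Homeo = {f. homeomorphic_map cantor cantor f}"

text \<open>Right action: p(gh) = (pg)h, so the product g*h is the function h o g.\<close>
definition homeo_group :: "(cpt \<Rightarrow> cpt) monoid" where
  "homeo_group = \<lparr>carrier = Homeo, mult = (\<lambda>g h. h \<circ> g), one = id\<rparr>"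

definition supp :: "(cpt \<Rightarrow> cpt) \<Rightarrow> cpt set" where
  "supp g = {p. g p \<noteq> p}"

definition vigorous_over :: "cpt set \<Rightarrow> (cpt \<Rightarrow> cpt) set \<Rightarrow> bool" where
  "vigorous_over D G \<longleftrightarrow>
     (\<forall>A B C. clopen_c A \<and> A \<noteq> {} \<and> A \<subseteq> D \<and>
        clopen_c B \<and> B \<noteq> {} \<and> B \<subseteq> A \<and> B \<noteq> A \<and>
        clopen_c C \<and> C \<noteq> {} \<and> C \<subseteq> A \<and> C \<noteq> A
        \<longrightarrow> (\<exists>\<gamma>\<in>G. supp \<gamma> \<subseteq> A \<and> \<gamma> ` B \<subseteq> C))"

definition simple_homeo_subgroup :: "(cpt \<Rightarrow> cpt) set \<Rightarrow> bool" where
  "simple_homeo_subgroup G \<longleftrightarrow>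
     subgroup G homeo_group \<and> G \<noteq> {id} \<and>
     (\<forall>N. N \<lhd> (homeo_group\<lparr>carrier := G\<rparr>) \<longrightarrow> N = {id} \<or> N = G)"

definition fin_gen :: "(cpt \<Rightarrow> cpt) set \<Rightarrow> bool" where
  "fin_gen G \<longleftrightarrow> (\<exists>F. finite F \<and> F \<subseteq> G \<and> generate homeo_group F = G)"

definition KK :: "cpt set \<Rightarrow> (cpt \<Rightarrow> cpt) set set" where
  "KK D = {G. simple_homeo_subgroup G \<and> (\<forall>g\<in>G. supp g \<subseteq> D) \<and> vigorous_over D G}"

definition KK_fg :: "cpt set \<Rightarrow> (cpt \<Rightarrow> cpt) set set" where
  "KK_fg D = {G \<in> KK D. fin_gen G}"

end

theory Submission
  imports Defs
begin

text \<open>Write \<Gamma> for the group generated by G \<union> H. Its elements are supported in U \<union> V, and it is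
  vigorous there: two clopen sets inside U \<union> V can be moved into each other by pushing material
  through the nonempty overlap U \<inter> V, first with elements of one group and then of the other; a clopen
  set missing U \<inter> V is first moved onto it by an element of G.

  To see that \<Gamma> is simple, let N be a nontrivial normal subgroup of \<Gamma>, and let n \<in> N move some
  point p \<in> U, say. Then n displaces a small clopen neighbourhood W of p, and for g, h \<in> G supported
  in W the commutator [g, h] lies in N, because it is also the commutator of g^-1 n g n^-1 \<in> N with h
  (the factor n g n^-1 is supported in n W and so commutes with h). Vigorousness makes such a
  commutator nontrivial, so N \<inter> G is a nontrivial normal subgroup of the simple group G, whence
  G \<subseteq> N. Since G moves points of U \<inter> V, the same argument then gives H \<subseteq> N, and so N = \<Gamma>.\<close>

text \<open>In HOL-Algebra syntax plain \<open>inv\<close> denotes the group inverse, so the inverse function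
  gets a name.\<close>
abbreviation hinv :: "(cpt \<Rightarrow> cpt) \<Rightarrow> cpt \<Rightarrow> cpt" where
  "hinv f \<equiv> inv_into UNIV f"

section \<open>Clopen subsets of the Cantor space\<close>

lemma topspace_cantor [simp]: "topspace cantor = UNIV"
  by (simp add: cantor_def)

lemma clopen_c_cylinder: "clopen_c {x. x k = b}"
proof -
  have c: "continuous_map cantor (discrete_topology UNIV) (\<lambda>x. x k)"
    unfolding cantor_def by (rule continuous_map_product_projection) simp
  have "openin cantor {x \<in> topspace cantor. x k \<in> {b}}"
    by (rule openin_continuous_map_preimage[OF c]) simp
  moreover have "closedin cantor {x \<in> topspace cantor. x k \<in> {b}}"
    by (rule closedin_continuous_map_preimage[OF c]) simp
  ultimately show ?thesis by (simp add: clopen_c_def)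
qed

lemma clopen_c_Int: "clopen_c A \<Longrightarrow> clopen_c B \<Longrightarrow> clopen_c (A \<inter> B)"
  by (auto simp: clopen_c_def)

lemma clopen_c_Diff: "clopen_c A \<Longrightarrow> clopen_c B \<Longrightarrow> clopen_c (A - B)"
  by (auto simp: clopen_c_def)

lemma clopen_c_split:
  assumes "clopen_c W" "W \<noteq> {}"
  obtains W1 W2
  where "clopen_c W1" "clopen_c W2" "W1 \<noteq> {}" "W2 \<noteq> {}" "W1 \<inter> W2 = {}" "W1 \<union> W2 = W"
proof -
  obtain x where x: "x \<in> W" using assms(2) by auto
  have "openin cantor W" using assms(1) by (simp add: clopen_c_def)
  then obtain U where U: "finite {i. U i \<noteq> UNIV}" "x \<in> Pi\<^sub>E UNIV U" "Pi\<^sub>E UNIV U \<subseteq> W"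
    using x unfolding cantor_def openin_product_topology_alt by fastforce
  obtain m where m: "U m = UNIV"
    using ex_new_if_finite[OF infinite_UNIV_nat U(1)] by blast
  text \<open>Flipping the free coordinate m keeps a point inside the basic neighbourhood.\<close>
  have "x(m := \<not> x m) \<in> W" using U(2,3) m by (auto simp: PiE_iff)
  then have "x(m := \<not> x m) \<in> W - {z. z m = x m}" by simp
  then have "W - {z. z m = x m} \<noteq> {}" by blast
  moreover have "W \<inter> {z. z m = x m} \<noteq> {}" using x by blast
  moreover have "clopen_c (W \<inter> {z. z m = x m})" "clopen_c (W - {z. z m = x m})"
    using assms(1) clopen_c_cylinder by (blast intro: clopen_c_Int clopen_c_Diff)+
  ultimately show ?thesis
    by (intro that[of "W \<inter> {z. z m = x m}" "W - {z. z m = x m}"]) auto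
qed

lemma Homeo_bij: "f \<in> Homeo \<Longrightarrow> bij f"
  unfolding Homeo_def bij_def
  by (metis homeomorphic_eq_everything_map mem_Collect_eq topspace_cantor)

lemma Homeo_inv_f [simp]: "f \<in> Homeo \<Longrightarrow> hinv f (f x) = x"
  by (simp add: Homeo_bij bij_is_inj)

lemma Homeo_f_inv [simp]: "f \<in> Homeo \<Longrightarrow> f (hinv f x) = x"
  by (simp add: Homeo_bij bij_is_surj surj_f_inv_f)

lemma Homeo_inv: "f \<in> Homeo \<Longrightarrow> hinv f \<in> Homeo"
proof -
  assume "f \<in> Homeo"
  then obtain g where g: "homeomorphic_maps cantor cantor f g"
    unfolding Homeo_def by (auto simp: homeomorphic_map_maps)
  then have gf: "\<And>x. g (f x) = x" and fg: "\<And>y. f (g y) = y"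
    by (simp_all add: homeomorphic_maps_def)
  then have "inj f" by (metis injI)
  have "g = hinv f"
  proof
    fix y
    show "g y = hinv f y" using inv_f_f[OF \<open>inj f\<close>, of "g y"] fg[of y] by simp
  qed
  with g show ?thesis
    unfolding Homeo_def by (auto simp: homeomorphic_maps_map)
qed

lemma clopen_c_image: "f \<in> Homeo \<Longrightarrow> clopen_c A \<Longrightarrow> clopen_c (f ` A)"
  unfolding clopen_c_def Homeo_def
  by (simp add: homeomorphic_map_openness homeomorphic_map_closedness)

lemma clopen_c_vimage: "f \<in> Homeo \<Longrightarrow> clopen_c A \<Longrightarrow> clopen_c (f -` A)"
  using clopen_c_image[OF Homeo_inv] by (simp add: Homeo_bij bij_vimage_eq_inv_image)

lemma clopen_c_displaced:
  assumes "n \<in> Homeo" "n p \<noteq> p" "p \<in> D" "clopen_c D"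
  obtains W where "clopen_c W" "p \<in> W" "W \<subseteq> D" "n ` W \<inter> W = {}"
proof -
  obtain k where k: "n p k \<noteq> p k" using assms(2) by auto
  define W where "W = D \<inter> {x. x k = p k} \<inter> n -` {z. z k = n p k}"
  have "clopen_c W"
    unfolding W_def by (intro clopen_c_Int clopen_c_vimage assms(1,4) clopen_c_cylinder)
  moreover have "n ` W \<inter> W = {}" using k by (auto simp: W_def)
  ultimately show ?thesis using that assms(3) unfolding W_def by blast
qed

lemma supp_subset_fixes: "supp g \<subseteq> A \<Longrightarrow> x \<notin> A \<Longrightarrow> g x = x"
  by (auto simp: supp_def)

lemma supp_id [simp]: "supp id = {}"
  by (simp add: supp_def)

lemma supp_comp: "supp (g \<circ> f) \<subseteq> supp f \<union> supp g"
  by (auto simp: supp_def)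

lemma supp_hinv:
  assumes "f \<in> Homeo"
  shows "supp (hinv f) = supp f"
proof -
  have "hinv f p = p \<longleftrightarrow> f p = p" for p
    by (metis Homeo_f_inv Homeo_inv_f assms)
  then show ?thesis by (simp add: supp_def)
qed

lemma bij_supp_subset_mem_iff:
  assumes "bij f" "supp f \<subseteq> P"
  shows "f x \<in> P \<longleftrightarrow> x \<in> P"
proof
  assume "f x \<in> P"
  then show "x \<in> P" using supp_subset_fixes[OF assms(2), of x] by metis
next
  assume "x \<in> P"
  then show "f x \<in> P"
    using supp_subset_fixes[OF assms(2), of "f x"] bij_is_inj[OF assms(1)] by (metis injD)
qed

lemma supp_disjoint_commute:
  assumes "bij f" "bij g" "supp f \<subseteq> P" "supp g \<subseteq> Q" "P \<inter> Q = {}"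
  shows "f (g x) = g (f x)"
proof -
  have fix_f: "f y = y" if "y \<notin> P" for y using supp_subset_fixes[OF assms(3) that] .
  have fix_g: "g y = y" if "y \<notin> Q" for y using supp_subset_fixes[OF assms(4) that] .
  consider "x \<in> P" | "x \<in> Q" | "x \<notin> P" "x \<notin> Q" by blast
  then show ?thesis
  proof cases
    case 1
    moreover have "f x \<in> P" using 1 bij_supp_subset_mem_iff[OF assms(1,3)] by blast
    ultimately have "x \<notin> Q" "f x \<notin> Q" using assms(5) by blast+
    then show ?thesis by (simp add: fix_g)
  next
    case 2
    moreover have "g x \<in> Q" using 2 bij_supp_subset_mem_iff[OF assms(2,4)] by blast
    ultimately have "x \<notin> P" "g x \<notin> P" using assms(5) by blast+
    then show ?thesis by (simp add: fix_f)
  qed (simp add: fix_f fix_g)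
qed

lemma supp_conj_subset:
  assumes "bij n" "supp g \<subseteq> W"
  shows "supp (n \<circ> g \<circ> hinv n) \<subseteq> n ` W"
proof
  fix y assume y: "y \<in> supp (n \<circ> g \<circ> hinv n)"
  have "n (hinv n y) = y" using assms(1) by (simp add: bij_is_surj surj_f_inv_f)
  show "y \<in> n ` W"
  proof (rule ccontr)
    assume "y \<notin> n ` W"
    with \<open>n (hinv n y) = y\<close> have "hinv n y \<notin> W" by force
    then have "(n \<circ> g \<circ> hinv n) y = y"
      using supp_subset_fixes[OF assms(2)] \<open>n (hinv n y) = y\<close> by simp
    with y show False by (simp add: supp_def)
  qed
qed

lemma carrier_homeo_group [simp]: "carrier homeo_group = Homeo"
  by (simp add: homeo_group_def)

lemma mult_homeo_group [simp]: "x \<otimes>\<^bsub>homeo_group\<^esub> y = y \<circ> x"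
  by (simp add: homeo_group_def)

lemma one_homeo_group [simp]: "\<one>\<^bsub>homeo_group\<^esub> = id"
  by (simp add: homeo_group_def)

lemma mult_homeo_group_restr [simp]: "x \<otimes>\<^bsub>homeo_group\<lparr>carrier := K\<rparr>\<^esub> y = y \<circ> x"
  by (simp add: homeo_group_def)

lemma one_homeo_group_restr [simp]: "\<one>\<^bsub>homeo_group\<lparr>carrier := K\<rparr>\<^esub> = id"
  by (simp add: homeo_group_def)

lemma Homeo_comp: "f \<in> Homeo \<Longrightarrow> g \<in> Homeo \<Longrightarrow> g \<circ> f \<in> Homeo"
  unfolding Homeo_def using homeomorphic_map_compose by blast

lemma id_Homeo: "id \<in> Homeo"
  unfolding Homeo_def by (simp add: homeomorphic_map_id)

lemma group_homeo_group: "group homeo_group"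
proof (rule groupI)
  fix x assume "x \<in> carrier homeo_group"
  then have "hinv x \<in> Homeo" "x \<circ> hinv x = id"
    by (simp_all add: Homeo_inv fun_eq_iff)
  then show "\<exists>y\<in>carrier homeo_group. y \<otimes>\<^bsub>homeo_group\<^esub> x = \<one>\<^bsub>homeo_group\<^esub>"
    by auto
qed (simp_all add: Homeo_comp id_Homeo comp_assoc)

lemma m_inv_homeo_group: "f \<in> Homeo \<Longrightarrow> inv\<^bsub>homeo_group\<^esub> f = hinv f"
  by (intro group.inv_equality[OF group_homeo_group]) (simp_all add: Homeo_inv fun_eq_iff)

lemma subgroup_homeoD:
  assumes "subgroup K homeo_group"
  shows "K \<subseteq> Homeo" "id \<in> K" "\<And>f g. f \<in> K \<Longrightarrow> g \<in> K \<Longrightarrow> g \<circ> f \<in> K"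
    "\<And>f. f \<in> K \<Longrightarrow> hinv f \<in> K"
  using subgroup.subset[OF assms] subgroup.one_closed[OF assms] subgroup.m_closed[OF assms]
    subgroup.m_inv_closed[OF assms] m_inv_homeo_group
  by (fastforce simp del: one_homeo_group simp: homeo_group_def)+

lemma normal_homeoD:
  assumes "subgroup \<Gamma> homeo_group" "N \<lhd> homeo_group\<lparr>carrier := \<Gamma>\<rparr>"
  shows "subgroup N homeo_group" "N \<subseteq> \<Gamma>" "\<And>x h. x \<in> \<Gamma> \<Longrightarrow> h \<in> N \<Longrightarrow> hinv x \<circ> h \<circ> x \<in> N"
proof -
  have N: "subgroup N (homeo_group\<lparr>carrier := \<Gamma>\<rparr>)"
    using assms(2) by (rule normal_imp_subgroup)
  then show "subgroup N homeo_group"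
    by (rule group.incl_subgroup[OF group_homeo_group assms(1)])
  from N show "N \<subseteq> \<Gamma>" using subgroup.subset by fastforce
  fix x h assume "x \<in> \<Gamma>" "h \<in> N"
  then have "x \<otimes>\<^bsub>homeo_group\<lparr>carrier := \<Gamma>\<rparr>\<^esub> h \<otimes>\<^bsub>homeo_group\<lparr>carrier := \<Gamma>\<rparr>\<^esub>
      inv\<^bsub>homeo_group\<lparr>carrier := \<Gamma>\<rparr>\<^esub> x \<in> N"
    using normal.inv_op_closed2[OF assms(2)] by simp
  then show "hinv x \<circ> h \<circ> x \<in> N"
    using \<open>x \<in> \<Gamma>\<close> group.m_inv_consistent[OF group_homeo_group assms(1)]
      m_inv_homeo_group subgroup_homeoD(1)[OF assms(1)]
    by (auto simp: comp_assoc)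
qed

lemma subgroup_supported: "subgroup {g \<in> Homeo. supp g \<subseteq> D} homeo_group"
proof (rule subgroup.intro)
  fix f g assume "f \<in> {g \<in> Homeo. supp g \<subseteq> D}" "g \<in> {g \<in> Homeo. supp g \<subseteq> D}"
  then show "f \<otimes>\<^bsub>homeo_group\<^esub> g \<in> {g \<in> Homeo. supp g \<subseteq> D}"
    using supp_comp[of g f] by (auto simp: Homeo_comp)
next
  fix f assume "f \<in> {g \<in> Homeo. supp g \<subseteq> D}"
  then show "inv\<^bsub>homeo_group\<^esub> f \<in> {g \<in> Homeo. supp g \<subseteq> D}"
    by (simp add: m_inv_homeo_group supp_hinv Homeo_inv)
qed (auto simp: id_Homeo)

lemma supp_generate_subset:
  assumes "A \<subseteq> Homeo" "\<And>g. g \<in> A \<Longrightarrow> supp g \<subseteq> D" "g \<in> generate homeo_group A"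
  shows "supp g \<subseteq> D"
  using group.generate_subgroup_incl[OF group_homeo_group _ subgroup_supported, of A D] assms
  by blast

section \<open>Vigorousness\<close>

definition vigorous_at :: "(cpt \<Rightarrow> cpt) set \<Rightarrow> cpt set \<Rightarrow> bool" where
  "vigorous_at S A \<longleftrightarrow>
     (\<forall>B C. clopen_c B \<and> B \<noteq> {} \<and> B \<subseteq> A \<and> B \<noteq> A \<and>
        clopen_c C \<and> C \<noteq> {} \<and> C \<subseteq> A \<and> C \<noteq> A
        \<longrightarrow> (\<exists>\<gamma>\<in>S. supp \<gamma> \<subseteq> A \<and> \<gamma> ` B \<subseteq> C))"

lemma vigorous_over_iff_at:
  "vigorous_over D S \<longleftrightarrow> (\<forall>A. clopen_c A \<and> A \<noteq> {} \<and> A \<subseteq> D \<longrightarrow> vigorous_at S A)"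
  unfolding vigorous_over_def vigorous_at_def by blast

lemma vigorous_atD:
  assumes "vigorous_at S A" "clopen_c B" "B \<noteq> {}" "B \<subseteq> A" "B \<noteq> A"
    "clopen_c C" "C \<noteq> {}" "C \<subseteq> A" "C \<noteq> A"
  obtains \<gamma> where "\<gamma> \<in> S" "supp \<gamma> \<subseteq> A" "\<gamma> ` B \<subseteq> C"
proof -
  have "\<exists>\<gamma>\<in>S. supp \<gamma> \<subseteq> A \<and> \<gamma> ` B \<subseteq> C"
    using assms unfolding vigorous_at_def by simp
  with that show ?thesis by blast
qed

lemma vigorous_overD:
  "vigorous_over D S \<Longrightarrow> clopen_c A \<Longrightarrow> A \<noteq> {} \<Longrightarrow> A \<subseteq> D \<Longrightarrow> vigorous_at S A"
  unfolding vigorous_over_def vigorous_at_def by simp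

lemma vigorous_over_mono: "vigorous_over D S \<Longrightarrow> S \<subseteq> T \<Longrightarrow> vigorous_over D T"
  unfolding vigorous_over_def by (meson subsetD)

lemma vigorous_over_subset: "vigorous_over D S \<Longrightarrow> E \<subseteq> D \<Longrightarrow> vigorous_over E S"
  unfolding vigorous_over_def by (meson order_trans)

lemma vigorous_over_moves_point:
  assumes "vigorous_over D S" "clopen_c E" "E \<noteq> {}" "E \<subseteq> D"
  obtains g q where "g \<in> S" "q \<in> E" "g q \<noteq> q"
proof -
  obtain E1 E2 where E: "clopen_c E1" "clopen_c E2" "E1 \<noteq> {}" "E2 \<noteq> {}" "E1 \<inter> E2 = {}"
    "E1 \<union> E2 = E"
    by (rule clopen_c_split[OF assms(2,3)])
  have E': "E1 \<subseteq> E" "E1 \<noteq> E" "E2 \<subseteq> E" "E2 \<noteq> E" using E by blast+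
  obtain g where "g \<in> S" "g ` E1 \<subseteq> E2"
    by (rule vigorous_atD[OF vigorous_overD[OF assms] E(1,3) E'(1,2) E(2,4) E'(3,4)])
  moreover obtain q where "q \<in> E1" using E(3) by blast
  ultimately have "g q \<in> E2" "q \<in> E1" by blast+
  with E(5) have "g q \<noteq> q" by auto
  with \<open>g \<in> S\<close> \<open>q \<in> E1\<close> E'(1) show ?thesis using that by blast
qed

lemma vigorous_at_push:
  assumes "vigorous_at S A" "id \<in> S" "clopen_c A" "clopen_c B" "\<not> A \<subseteq> B"
    "clopen_c C" "C \<noteq> {}" "C \<subseteq> A"
  obtains \<gamma> where "\<gamma> \<in> S" "supp \<gamma> \<subseteq> A" "\<gamma> ` B \<subseteq> C \<union> (B - A)"
proof (cases "B \<inter> A = {} \<or> C = A")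
  case True
  then show ?thesis using that[of id] assms(2) by auto
next
  case False
  then obtain \<gamma> where \<gamma>: "\<gamma> \<in> S" "supp \<gamma> \<subseteq> A" "\<gamma> ` (B \<inter> A) \<subseteq> C"
    using assms by (elim vigorous_atD[of S A "B \<inter> A" C]) (auto intro: clopen_c_Int)
  have "\<gamma> ` B \<subseteq> C \<union> (B - A)"
  proof
    fix y assume "y \<in> \<gamma> ` B"
    then obtain x where "x \<in> B" "y = \<gamma> x" by blast
    then show "y \<in> C \<union> (B - A)"
      using \<gamma>(3) supp_subset_fixes[OF \<gamma>(2), of x] by (cases "x \<in> A") auto
  qed
  with \<gamma> that show ?thesis by blast
qed

lemma vigorous_at_Un_of_not_subset:
  assumes S: "subgroup S homeo_group"
    and A: "vigorous_at S A1" "vigorous_at S A2" "clopen_c A1" "clopen_c A2" "A1 \<inter> A2 \<noteq> {}"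
    and B: "clopen_c B" "B \<subseteq> A1 \<union> A2" "\<not> A1 \<subseteq> B"
    and C: "clopen_c C" "C \<noteq> {}" "C \<subseteq> A1 \<union> A2"
  shows "\<exists>\<gamma>\<in>S. supp \<gamma> \<subseteq> A1 \<union> A2 \<and> \<gamma> ` B \<subseteq> C"
proof -
  note S' = subgroup_homeoD[OF S]
  have comp: "g \<circ> f \<in> S \<and> supp (g \<circ> f) \<subseteq> A1 \<union> A2"
    if "f \<in> S" "g \<in> S" "supp f \<subseteq> A1 \<union> A2" "supp g \<subseteq> A1 \<union> A2" for f g
    using that S'(3) supp_comp[of g f] by blast
  obtain t t' where t: "clopen_c t" "clopen_c t'" "t \<noteq> {}" "t' \<noteq> {}" "t \<inter> t' = {}"
    "t \<union> t' = A1 \<inter> A2"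
    using clopen_c_split[OF clopen_c_Int[OF A(3,4)] A(5)] by blast
  have t_sub: "t \<subseteq> A1" "t \<subseteq> A2" "t' \<subseteq> A1" "t' \<subseteq> A2" using t(6) by blast+
  have t_proper: "\<not> A1 \<subseteq> t" "\<not> A2 \<subseteq> t" using t(4,5) t_sub(3,4) by blast+
  text \<open>First move B \<inter> A1 into the half t of the overlap; the image then lies in A2 but misses t'.\<close>
  obtain \<gamma>1 where \<gamma>1: "\<gamma>1 \<in> S" "supp \<gamma>1 \<subseteq> A1" "\<gamma>1 ` B \<subseteq> t \<union> (B - A1)"
    by (rule vigorous_at_push[OF A(1) S'(2) A(3) B(1,3) t(1,3) t_sub(1)])
  define B1 where "B1 = \<gamma>1 ` B"
  have B1_clopen: "clopen_c B1"
    unfolding B1_def using clopen_c_image \<gamma>1(1) S'(1) B(1) by blast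
  have B1_sub: "B1 \<subseteq> A2" unfolding B1_def using \<gamma>1(3) t_sub(2) B(2) by blast
  have "t' \<inter> B1 = {}" unfolding B1_def using \<gamma>1(3) t(5) t_sub(3) by blast
  then have B1_proper: "\<not> A2 \<subseteq> B1" using t(4) t_sub(4) by blast
  show ?thesis
  proof (cases "C \<inter> A2 = {}")
    case False
    obtain \<gamma>2 where \<gamma>2: "\<gamma>2 \<in> S" "supp \<gamma>2 \<subseteq> A2" "\<gamma>2 ` B1 \<subseteq> (C \<inter> A2) \<union> (B1 - A2)"
      by (rule vigorous_at_push[OF A(2) S'(2) A(4) B1_clopen B1_proper clopen_c_Int[OF C(1) A(4)]
            False Int_lower2])
    have "(\<gamma>2 \<circ> \<gamma>1) ` B = \<gamma>2 ` B1" by (simp add: B1_def image_comp)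
    also have "\<dots> \<subseteq> C" using \<gamma>2(3) B1_sub by blast
    finally show ?thesis using comp[of \<gamma>1 \<gamma>2] \<gamma>1 \<gamma>2 by blast
  next
    case True
    text \<open>C lies in A1: move B1 into t inside A2, then t into C inside A1.\<close>
    then have C_sub: "C \<subseteq> A1" using C(3) by blast
    obtain \<gamma>2 where \<gamma>2: "\<gamma>2 \<in> S" "supp \<gamma>2 \<subseteq> A2" "\<gamma>2 ` B1 \<subseteq> t \<union> (B1 - A2)"
      by (rule vigorous_at_push[OF A(2) S'(2) A(4) B1_clopen B1_proper t(1,3) t_sub(2)])
    obtain \<gamma>3 where \<gamma>3: "\<gamma>3 \<in> S" "supp \<gamma>3 \<subseteq> A1" "\<gamma>3 ` t \<subseteq> C \<union> (t - A1)"
      by (rule vigorous_at_push[OF A(1) S'(2) A(3) t(1) t_proper(1) C(1,2) C_sub])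
    have "(\<gamma>3 \<circ> \<gamma>2 \<circ> \<gamma>1) ` B = \<gamma>3 ` \<gamma>2 ` B1" by (simp add: B1_def image_comp)
    also have "\<dots> \<subseteq> \<gamma>3 ` t" using \<gamma>2(3) B1_sub by (intro image_mono) blast
    also have "\<dots> \<subseteq> C" using \<gamma>3(3) t_sub(1) by blast
    finally have "(\<gamma>3 \<circ> \<gamma>2 \<circ> \<gamma>1) ` B \<subseteq> C" .
    moreover have "\<gamma>3 \<circ> \<gamma>2 \<in> S" "supp (\<gamma>3 \<circ> \<gamma>2) \<subseteq> A1 \<union> A2"
      using comp[of \<gamma>2 \<gamma>3] \<gamma>2 \<gamma>3 by blast+
    ultimately show ?thesis using comp[of \<gamma>1 "\<gamma>3 \<circ> \<gamma>2"] \<gamma>1 by blast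
  qed
qed

lemma vigorous_at_Un:
  assumes "subgroup S homeo_group" "vigorous_at S A1" "vigorous_at S A2"
    "clopen_c A1" "clopen_c A2" "A1 \<inter> A2 \<noteq> {}"
  shows "vigorous_at S (A1 \<union> A2)"
  unfolding vigorous_at_def
proof (intro allI impI)
  fix B C assume BC: "clopen_c B \<and> B \<noteq> {} \<and> B \<subseteq> A1 \<union> A2 \<and> B \<noteq> A1 \<union> A2 \<and>
    clopen_c C \<and> C \<noteq> {} \<and> C \<subseteq> A1 \<union> A2 \<and> C \<noteq> A1 \<union> A2"
  then consider "\<not> A1 \<subseteq> B" | "\<not> A2 \<subseteq> B" by blast
  then show "\<exists>\<gamma>\<in>S. supp \<gamma> \<subseteq> A1 \<union> A2 \<and> \<gamma> ` B \<subseteq> C"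
  proof cases
    case 1
    then show ?thesis using vigorous_at_Un_of_not_subset[OF assms] BC by blast
  next
    case 2
    then show ?thesis
      using vigorous_at_Un_of_not_subset[OF assms(1,3,2,5,4)] assms(6) BC by (simp add: Int_commute Un_commute)
  qed
qed

lemma vigorous_at_image:
  assumes S: "subgroup S homeo_group" and \<alpha>: "\<alpha> \<in> S" and vig: "vigorous_at S (\<alpha> ` A)"
  shows "vigorous_at S A"
  unfolding vigorous_at_def
proof (intro allI impI)
  note S' = subgroup_homeoD[OF S]
  have \<alpha>H: "\<alpha> \<in> Homeo" using \<alpha> S'(1) by blast
  then have "inj \<alpha>" using Homeo_bij bij_is_inj by blast
  fix B C assume BC: "clopen_c B \<and> B \<noteq> {} \<and> B \<subseteq> A \<and> B \<noteq> A \<and>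
    clopen_c C \<and> C \<noteq> {} \<and> C \<subseteq> A \<and> C \<noteq> A"
  then have "clopen_c (\<alpha> ` B)" "\<alpha> ` B \<noteq> {}" "\<alpha> ` B \<subseteq> \<alpha> ` A" "\<alpha> ` B \<noteq> \<alpha> ` A"
    "clopen_c (\<alpha> ` C)" "\<alpha> ` C \<noteq> {}" "\<alpha> ` C \<subseteq> \<alpha> ` A" "\<alpha> ` C \<noteq> \<alpha> ` A"
    using clopen_c_image[OF \<alpha>H] inj_image_eq_iff[OF \<open>inj \<alpha>\<close>] by auto
  then obtain \<beta> where \<beta>: "\<beta> \<in> S" "supp \<beta> \<subseteq> \<alpha> ` A" "\<beta> ` \<alpha> ` B \<subseteq> \<alpha> ` C"
    by (rule vigorous_atD[OF vig])
  define \<gamma> where "\<gamma> = hinv \<alpha> \<circ> \<beta> \<circ> \<alpha>"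
  have "\<gamma> \<in> S" unfolding \<gamma>_def using \<alpha> \<beta>(1) S'(3,4) by blast
  moreover have "supp \<gamma> \<subseteq> A"
  proof
    fix x assume x: "x \<in> supp \<gamma>"
    show "x \<in> A"
    proof (rule ccontr)
      assume "x \<notin> A"
      then have "\<beta> (\<alpha> x) = \<alpha> x"
        using supp_subset_fixes[OF \<beta>(2)] inj_image_mem_iff[OF \<open>inj \<alpha>\<close>] by blast
      with x \<alpha>H show False by (simp add: \<gamma>_def supp_def)
    qed
  qed
  moreover have "\<gamma> ` B \<subseteq> C"
  proof
    fix y assume "y \<in> \<gamma> ` B"
    then obtain b where "b \<in> B" "y = \<gamma> b" by blast
    moreover from \<open>b \<in> B\<close> \<beta>(3) obtain c where "c \<in> C" "\<beta> (\<alpha> b) = \<alpha> c" by blast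
    ultimately show "y \<in> C" using \<alpha>H by (simp add: \<gamma>_def)
  qed
  ultimately show "\<exists>\<gamma>\<in>S. supp \<gamma> \<subseteq> A \<and> \<gamma> ` B \<subseteq> C" by blast
qed

lemma vigorous_over_Un:
  assumes S: "subgroup S homeo_group"
    and vig: "vigorous_over U S" "vigorous_over V S"
    and UV: "clopen_c U" "clopen_c V" "U \<inter> V \<noteq> {}"
  shows "vigorous_over (U \<union> V) S"
proof -
  have meets: "vigorous_at S A" if A: "clopen_c A" "A \<subseteq> U \<union> V" "A \<inter> U \<inter> V \<noteq> {}" for A
  proof -
    have clopen: "clopen_c (A \<inter> U)" "clopen_c (A \<inter> V)"
      using clopen_c_Int A(1) UV(1,2) by blast+
    have "vigorous_at S (A \<inter> U)" "vigorous_at S (A \<inter> V)"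
      using vigorous_overD[OF vig(1) clopen(1)] vigorous_overD[OF vig(2) clopen(2)] A(3) by blast+
    then have "vigorous_at S ((A \<inter> U) \<union> (A \<inter> V))"
      using vigorous_at_Un[OF S _ _ clopen] A(3) by blast
    moreover have "(A \<inter> U) \<union> (A \<inter> V) = A" using A(2) by blast
    ultimately show ?thesis by simp
  qed
  show ?thesis
    unfolding vigorous_over_iff_at
  proof (intro allI impI)
    fix A assume "clopen_c A \<and> A \<noteq> {} \<and> A \<subseteq> U \<union> V"
    then have A: "clopen_c A" "A \<noteq> {}" "A \<subseteq> U \<union> V" by blast+
    consider "A \<inter> U = {}" | "A \<inter> U \<inter> V \<noteq> {}" | "A \<inter> U \<noteq> {}" "A \<inter> U \<inter> V = {}" by blast
    then show "vigorous_at S A"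
    proof cases
      case 1
      then have "A \<subseteq> V" using A(3) by blast
      then show ?thesis by (rule vigorous_overD[OF vig(2) A(1,2)])
    next
      case 2
      then show ?thesis by (rule meets[OF A(1,3)])
    next
      case 3
      text \<open>An element supported in U moves A \<inter> U into the overlap, reducing to the previous case.\<close>
      have "A \<inter> U \<noteq> U" "U \<inter> V \<noteq> U" using 3 UV(3) by blast+
      then obtain g where g: "g \<in> S" "supp g \<subseteq> U" "g ` (A \<inter> U) \<subseteq> U \<inter> V"
        using vigorous_atD[OF vigorous_overD[OF vig(1) UV(1) _ subset_refl]
            clopen_c_Int[OF A(1) UV(1)] 3(1) Int_lower2 _ clopen_c_Int[OF UV(1,2)] UV(3) Int_lower1]
        by blast
      have "g ` A \<subseteq> U \<union> V"
      proof
        fix y assume "y \<in> g ` A"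
        then obtain x where "x \<in> A" "y = g x" by blast
        then show "y \<in> U \<union> V"
          using g(3) supp_subset_fixes[OF g(2), of x] A(3) by (cases "x \<in> U") auto
      qed
      moreover have "g ` A \<inter> U \<inter> V \<noteq> {}" using g(3) 3(1) by blast
      moreover have "clopen_c (g ` A)"
        using clopen_c_image[OF _ A(1)] g(1) subgroup_homeoD(1)[OF S] by blast
      ultimately have "vigorous_at S (g ` A)" using meets by blast
      then show ?thesis by (rule vigorous_at_image[OF S g(1)])
    qed
  qed
qed

section \<open>Simplicity\<close>

text \<open>With the right action of homeo_group this is the group commutator g h g^-1 h^-1.\<close>
definition commutator :: "(cpt \<Rightarrow> cpt) \<Rightarrow> (cpt \<Rightarrow> cpt) \<Rightarrow> cpt \<Rightarrow> cpt" where
  "commutator g h = hinv h \<circ> hinv g \<circ> h \<circ> g"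

lemma subgroup_commutator:
  "subgroup S homeo_group \<Longrightarrow> g \<in> S \<Longrightarrow> h \<in> S \<Longrightarrow> commutator g h \<in> S"
  unfolding commutator_def using subgroup_homeoD(3,4) by metis

lemma vigorous_over_commutator_ne_id:
  assumes "vigorous_over W S" "clopen_c W" "W \<noteq> {}" "S \<subseteq> Homeo"
  obtains g h where "g \<in> S" "h \<in> S" "supp g \<subseteq> W" "supp h \<subseteq> W" "commutator g h \<noteq> id"
proof -
  obtain W1 W2 where W: "clopen_c W1" "clopen_c W2" "W1 \<noteq> {}" "W2 \<noteq> {}" "W1 \<inter> W2 = {}"
    "W1 \<union> W2 = W"
    by (rule clopen_c_split[OF assms(2,3)])
  obtain W11 W12 where W1: "clopen_c W11" "clopen_c W12" "W11 \<noteq> {}" "W12 \<noteq> {}" "W11 \<inter> W12 = {}"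
    "W11 \<union> W12 = W1"
    by (rule clopen_c_split[OF W(1,3)])
  have "W1 \<subseteq> W" "W1 \<noteq> W" "W2 \<subseteq> W" "W2 \<noteq> W" using W by blast+
  then obtain g where g: "g \<in> S" "supp g \<subseteq> W" "g ` W1 \<subseteq> W2"
    using vigorous_atD[OF vigorous_overD[OF assms(1-3) subset_refl] W(1,3) _ _ W(2,4)] by blast
  have "W11 \<subseteq> W1" "W11 \<noteq> W1" "W12 \<subseteq> W1" "W12 \<noteq> W1" using W1 by blast+
  then obtain h where h: "h \<in> S" "supp h \<subseteq> W1" "h ` W11 \<subseteq> W12"
    using vigorous_atD[OF vigorous_overD[OF assms(1) W(1,3)] W1(1,3) _ _ W1(2,4)] W(6) by blast
  have gH: "g \<in> Homeo" and hH: "h \<in> Homeo" using g(1) h(1) assms(4) by blast+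
  have "commutator g h \<noteq> id"
  proof
    assume "commutator g h = id"
    obtain x where x: "x \<in> W11" using W1(3) by blast
    text \<open>x is sent into W2 by g, where h acts trivially, and into W12 by h.\<close>
    have "hinv h (hinv g (h (g x))) = x"
      using fun_cong[OF \<open>commutator g h = id\<close>, of x] by (simp add: commutator_def)
    then have "h (g x) = g (h x)" by (metis Homeo_f_inv gH hH)
    moreover have "g x \<in> W2" using g(3) x W1(6) by blast
    then have "h (g x) = g x" using supp_subset_fixes[OF h(2)] W(5) by blast
    ultimately have "h x = x" by (metis Homeo_inv_f gH)
    moreover have "h x \<in> W12" using h(3) x by blast
    ultimately show False using x W1(5) by auto
  qed
  with g h W(6) that show ?thesis by blast
qed

text \<open>The factor n g n^-1 of g^-1 n g n^-1 is supported in n W, disjoint from W, so it commutes with h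
  and drops out of the commutator with h.\<close>
lemma commutator_in_normal:
  assumes \<Gamma>: "subgroup \<Gamma> homeo_group" and N: "N \<lhd> homeo_group\<lparr>carrier := \<Gamma>\<rparr>"
    and n: "n \<in> N" "n ` W \<inter> W = {}"
    and gh: "g \<in> \<Gamma>" "h \<in> \<Gamma>" "supp g \<subseteq> W" "supp h \<subseteq> W"
  shows "commutator g h \<in> N"
proof -
  note N' = normal_homeoD[OF \<Gamma> N]
  note N_closed = subgroup_homeoD[OF N'(1)]
  have nH: "n \<in> Homeo" and gH: "g \<in> Homeo" and hH: "h \<in> Homeo"
    using n(1) gh(1,2) N'(2) subgroup_homeoD(1)[OF \<Gamma>] by blast+
  define s where "s = n \<circ> g \<circ> hinv n"
  have sH: "s \<in> Homeo" unfolding s_def by (intro Homeo_comp Homeo_inv nH gH)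
  have s_h: "s (h x) = h (s x)" for x
    using supp_disjoint_commute[OF Homeo_bij[OF sH] Homeo_bij[OF hH] _ gh(4) n(2)]
      supp_conj_subset[OF Homeo_bij[OF nH] gh(3)] by (simp add: s_def)
  define c where "c = hinv g \<circ> s"
  have "c = (hinv g \<circ> n \<circ> g) \<circ> hinv n" by (simp add: c_def s_def comp_assoc)
  then have c: "c \<in> N" using N_closed(3,4) N'(3) n(1) gh(1) by metis
  then have cH: "c \<in> Homeo" using N_closed(1) by blast
  have c_inv: "hinv c y = hinv s (g y)" for y
  proof -
    have "c (hinv s (g y)) = y" by (simp add: c_def sH gH)
    then show ?thesis by (metis Homeo_inv_f cH)
  qed
  have "(hinv h \<circ> c \<circ> h) \<circ> hinv c \<in> N" using N_closed(3,4) N'(3) c gh(2) by metis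
  moreover have "(hinv h \<circ> c \<circ> h) \<circ> hinv c = commutator g h"
  proof
    fix x
    have "((hinv h \<circ> c \<circ> h) \<circ> hinv c) x = hinv h (hinv g (s (h (hinv s (g x)))))"
      by (simp only: comp_apply c_inv) (simp add: c_def)
    also have "\<dots> = hinv h (hinv g (h (g x)))" by (simp add: s_h sH)
    finally show "((hinv h \<circ> c \<circ> h) \<circ> hinv c) x = commutator g h x"
      by (simp add: commutator_def)
  qed
  ultimately show ?thesis by simp
qed

lemma simple_subgroup_subset_normal:
  assumes K: "simple_homeo_subgroup K" "vigorous_over D K" "clopen_c D" "K \<subseteq> \<Gamma>"
    and \<Gamma>: "subgroup \<Gamma> homeo_group" and N: "N \<lhd> homeo_group\<lparr>carrier := \<Gamma>\<rparr>"
    and n: "n \<in> N" "p \<in> D" "n p \<noteq> p"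
  shows "K \<subseteq> N"
proof -
  have K_sub: "subgroup K homeo_group"
    and K_simple: "\<And>M. M \<lhd> homeo_group\<lparr>carrier := K\<rparr> \<Longrightarrow> M = {id} \<or> M = K"
    using K(1) unfolding simple_homeo_subgroup_def by blast+
  have nH: "n \<in> Homeo" using n(1) normal_homeoD(2)[OF \<Gamma> N] subgroup_homeoD(1)[OF \<Gamma>] by blast
  obtain W where W: "clopen_c W" "p \<in> W" "W \<subseteq> D" "n ` W \<inter> W = {}"
    by (rule clopen_c_displaced[OF nH n(3,2) K(3)])
  have "W \<noteq> {}" using W(2) by blast
  obtain g h where gh: "g \<in> K" "h \<in> K" "supp g \<subseteq> W" "supp h \<subseteq> W" "commutator g h \<noteq> id"
    by (rule vigorous_over_commutator_ne_id[OF vigorous_over_subset[OF K(2) W(3)] W(1) \<open>W \<noteq> {}\<close>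
          subgroup_homeoD(1)[OF K_sub]])
  have "g \<in> \<Gamma>" "h \<in> \<Gamma>" using gh(1,2) K(4) by blast+
  then have "commutator g h \<in> N \<inter> K"
    using commutator_in_normal[OF \<Gamma> N n(1) W(4) _ _ gh(3,4)] subgroup_commutator[OF K_sub gh(1,2)]
    by blast
  moreover have "\<Gamma> \<inter> K = K" using K(4) by blast
  then have "N \<inter> K \<lhd> homeo_group\<lparr>carrier := K\<rparr>"
    using group.normal_inter[OF group_homeo_group \<Gamma> K_sub N] by simp
  then have "N \<inter> K = {id} \<or> N \<inter> K = K" by (rule K_simple)
  ultimately have "N \<inter> K = K" using gh(5) by auto
  then show ?thesis by blast
qed

section \<open>The group generated by two vigorous simple groups\<close>

lemma KK_D:
  assumes "K \<in> KK D"
  shows "subgroup K homeo_group" "simple_homeo_subgroup K" "\<And>g. g \<in> K \<Longrightarrow> supp g \<subseteq> D"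
    "vigorous_over D K"
  using assms unfolding KK_def simple_homeo_subgroup_def by blast+

lemma subgroup_generate_Un:
  assumes "subgroup G homeo_group" "subgroup H homeo_group"
  shows "subgroup (generate homeo_group (G \<union> H)) homeo_group"
    "G \<subseteq> generate homeo_group (G \<union> H)" "H \<subseteq> generate homeo_group (G \<union> H)"
  using group.generate_is_subgroup[OF group_homeo_group] subgroup.subset[OF assms(1)]
    subgroup.subset[OF assms(2)] generate.incl[of _ "G \<union> H" homeo_group]
  by auto

lemma supp_generate_Un:
  assumes "G \<in> KK U" "H \<in> KK V" "g \<in> generate homeo_group (G \<union> H)"
  shows "supp g \<subseteq> U \<union> V"
proof (rule supp_generate_subset)
  show "G \<union> H \<subseteq> Homeo"
    using subgroup_homeoD(1)[OF KK_D(1)[OF assms(1)]] subgroup_homeoD(1)[OF KK_D(1)[OF assms(2)]]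
    by blast
qed (use assms KK_D(3) in blast)+

lemma simple_generate_Un:
  assumes G: "G \<in> KK U" and H: "H \<in> KK V" and UV: "clopen_c U" "clopen_c V" "U \<inter> V \<noteq> {}"
  shows "simple_homeo_subgroup (generate homeo_group (G \<union> H))"
proof -
  define \<Gamma> where "\<Gamma> = generate homeo_group (G \<union> H)"
  note G' = KK_D[OF G] and H' = KK_D[OF H]
  note \<Gamma>' = subgroup_generate_Un[OF G'(1) H'(1), folded \<Gamma>_def]
  have "N = {id} \<or> N = \<Gamma>" if N: "N \<lhd> homeo_group\<lparr>carrier := \<Gamma>\<rparr>" for N
  proof (cases "N = {id}")
    case False
    note N' = normal_homeoD[OF \<Gamma>'(1) N]
    obtain n where "n \<in> N" "n \<noteq> id"
      using False subgroup_homeoD(2)[OF N'(1)] by auto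
    then obtain p where n: "n \<in> N" "n p \<noteq> p" by (auto simp: fun_eq_iff)
    have "p \<in> U \<union> V"
      using supp_generate_Un[OF G H, of n] n N'(2) unfolding \<Gamma>_def by (auto simp: supp_def)
    have G_absorbed: "G \<subseteq> N" if "n \<in> N" "p \<in> U" "n p \<noteq> p" for n p
      using simple_subgroup_subset_normal[OF G'(2,4) UV(1) \<Gamma>'(2,1) N that] .
    have H_absorbed: "H \<subseteq> N" if "n \<in> N" "p \<in> V" "n p \<noteq> p" for n p
      using simple_subgroup_subset_normal[OF H'(2,4) UV(2) \<Gamma>'(3,1) N that] .
    have UV_clopen: "clopen_c (U \<inter> V)" using clopen_c_Int[OF UV(1,2)] .
    obtain g q where g: "g \<in> G" "q \<in> U \<inter> V" "g q \<noteq> q"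
      by (rule vigorous_over_moves_point[OF G'(4) UV_clopen UV(3) Int_lower1])
    obtain h r where h: "h \<in> H" "r \<in> U \<inter> V" "h r \<noteq> r"
      by (rule vigorous_over_moves_point[OF H'(4) UV_clopen UV(3) Int_lower2])
    text \<open>Whichever group absorbs n first passes it on through points of the overlap.\<close>
    have "G \<subseteq> N \<and> H \<subseteq> N"
    proof (cases "p \<in> U")
      case True
      then have "G \<subseteq> N" using G_absorbed n by blast
      then show ?thesis using H_absorbed[of g q] g by blast
    next
      case False
      then have "H \<subseteq> N" using H_absorbed n \<open>p \<in> U \<union> V\<close> by blast
      then show ?thesis using G_absorbed[of h r] h by blast
    qed
    then have "\<Gamma> \<subseteq> N"
      unfolding \<Gamma>_def by (intro group.generate_subgroup_incl[OF group_homeo_group _ N'(1)]) blast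
    with N'(2) show ?thesis by blast
  qed simp
  moreover have "\<Gamma> \<noteq> {id}"
  proof
    assume "\<Gamma> = {id}"
    then have "G = {id}" using \<Gamma>'(2) subgroup_homeoD(2)[OF G'(1)] by auto
    then show False using G'(2) unfolding simple_homeo_subgroup_def by simp
  qed
  ultimately show ?thesis
    using \<Gamma>'(1) unfolding simple_homeo_subgroup_def \<Gamma>_def by simp
qed

lemma KK_generate_Un:
  assumes G: "G \<in> KK U" and H: "H \<in> KK V" and UV: "clopen_c U" "clopen_c V" "U \<inter> V \<noteq> {}"
  shows "generate homeo_group (G \<union> H) \<in> KK (U \<union> V)"
proof -
  note G' = KK_D[OF G] and H' = KK_D[OF H]
  note \<Gamma>' = subgroup_generate_Un[OF G'(1) H'(1)]
  have "vigorous_over (U \<union> V) (generate homeo_group (G \<union> H))"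
    using vigorous_over_Un[OF \<Gamma>'(1) vigorous_over_mono[OF G'(4) \<Gamma>'(2)]
        vigorous_over_mono[OF H'(4) \<Gamma>'(3)] UV] .
  then show ?thesis
    using simple_generate_Un[OF assms] supp_generate_Un[OF G H] unfolding KK_def by blast
qed

lemma fin_gen_generate_Un:
  assumes "subgroup G homeo_group" "subgroup H homeo_group" "fin_gen G" "fin_gen H"
  shows "fin_gen (generate homeo_group (G \<union> H))"
proof -
  interpret group homeo_group by (rule group_homeo_group)
  obtain F1 F2 where F1: "finite F1" "F1 \<subseteq> G" "generate homeo_group F1 = G"
    and F2: "finite F2" "F2 \<subseteq> H" "generate homeo_group F2 = H"
    using assms(3,4) unfolding fin_gen_def by blast
  have F_carrier: "F1 \<union> F2 \<subseteq> carrier homeo_group"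
    using F1(2) F2(2) subgroup.subset[OF assms(1)] subgroup.subset[OF assms(2)] by blast
  have "G \<union> H \<subseteq> generate homeo_group (F1 \<union> F2)"
    using mono_generate[of F1 "F1 \<union> F2"] mono_generate[of F2 "F1 \<union> F2"] F1(3) F2(3) by blast
  then have "generate homeo_group (G \<union> H) \<subseteq> generate homeo_group (F1 \<union> F2)"
    by (rule generate_subgroup_incl[OF _ generate_is_subgroup[OF F_carrier]])
  moreover have "generate homeo_group (F1 \<union> F2) \<subseteq> generate homeo_group (G \<union> H)"
    using F1(2) F2(2) by (intro mono_generate) blast
  moreover have "F1 \<union> F2 \<subseteq> generate homeo_group (G \<union> H)"
    using F1(2) F2(2) generate.incl[of _ "G \<union> H" homeo_group] by blast
  ultimately show ?thesis
    unfolding fin_gen_def using F1(1) F2(1) by (intro exI[of _ "F1 \<union> F2"]) blast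
qed

theorem proposition2p16:
  assumes "U \<in> K_C" and "V \<in> K_C" and "U \<inter> V \<noteq> {}"
    and "G \<in> KK U" and "H \<in> KK V"
  shows "generate homeo_group (G \<union> H) \<in> KK (U \<union> V)
    \<and> (fin_gen G \<and> fin_gen H \<longrightarrow> generate homeo_group (G \<union> H) \<in> KK_fg (U \<union> V))"
proof -
  have "clopen_c U" "clopen_c V" using assms(1,2) unfolding K_C_def by blast+
  then have "generate homeo_group (G \<union> H) \<in> KK (U \<union> V)"
    using KK_generate_Un assms(3-5) by blast
  moreover have "fin_gen G \<and> fin_gen H \<longrightarrow> fin_gen (generate homeo_group (G \<union> H))"
    using fin_gen_generate_Un KK_D(1)[OF assms(4)] KK_D(1)[OF assms(5)] by blast
  ultimately show ?thesis unfolding KK_fg_def by blast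
qed

end
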